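(* Let $c_1,\dots,c_k\in(1,\infty)$, let $\lambda\in(0,\infty)^k$ satisfy $\lambda_j/(2g'(\|Y-X\hat\beta^\lambda\|_2^2))=c_j\|(XP_jM_j^{+})^\top\varepsilon\|_{q_j}^*$ for all $j$, and set $a_j:=2(c_j-1)\|(XP_jM_j^{+})^\top\varepsilon\|_{q_j}^*$ for $j=1,\dots,k$. For $a=(a_1,\dots,a_k)$ define $L_a(\beta):=\frac1n\|X(\beta^*-\beta)\|_2^2+\frac1n\sum_{j=1}^ka_j\|M_j\beta\|_{q_j}$. Then, with probability one, $$L_a(\hat\beta^\lambda)\le\Big(1+\max_{j\in\{1,\dots,k\}}\frac{4\|(XP_jM_j^{+})^\top\varepsilon\|_{q_j}^*}{a_j}\Big)\min_{\beta\in\mathbb{R}^p}L_a(\beta).$$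
   Context: Standing setup. Model: $Y=X\beta^*+\varepsilon$ with $Y\in\mathbb{R}^n$, $X\in\mathbb{R}^{n\times p}$, $\beta^*\in\mathbb{R}^p$, $\varepsilon\in\mathbb{R}^n$ (random). Link function $g:\mathbb{R}\to[0,\infty)$ with $g(0)=0$, $g$ continuous and strictly increasing on $[0,\infty)$, continuously differentiable on $(0,\infty)$ with strictly positive and non-increasing derivative $g'$, and such that $\alpha\mapsto g(\|\alpha\|_2^2)$ is strictly convex on $\mathbb{R}^n$. Penalty: $k\ge1$, matrices $M_1,\dots,M_k\in\mathbb{R}^{p\times p}$ with $\bigcap_{j=1}^k\mathrm{Ker}(M_j)=\{0\}$, exponents $q_j\ge1$, $\|\cdot\|_{q_j}$ the $\ell_{q_j}$-norm on $\mathbb{R}^p$, and $\|\cdot\|_{q_j}^*$ its dual norm. For $\lambda\in(0,\infty)^k$, $\hat\beta^\lambda$ denotes any element of $\arg\min_{\beta\in\mathbb{R}^p}\{g(\|Y-X\beta\|_2^2)+\sum_{j=1}^k\lambda_j\|M_j\beta\|_{q_j}\}$. $A^+$ denotes the Moore–Penrose pseudoinverse; $P_1,\dots,P_k\in\mathbb{R}^{p\times p}$ are fixed projection matrices with $\sum_{j=1}^kP_jM_j^+M_j=I_{p\times p}$. Noise assumption: with probability one, $Y\neq0$ and $\min_{j}\|(XP_jM_j^{+})^\top\varepsilon\|_{q_j}^*>0$. *)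

theory Defs
  imports "HOL-Probability.Probability"
begin

definition lq_norm :: "real \<Rightarrow> real^'p \<Rightarrow> real" where
  "lq_norm q x = (\<Sum>i\<in>UNIV. \<bar>x $ i\<bar> powr q) powr (1 / q)"

definition lq_dual_norm :: "real \<Rightarrow> real^'p \<Rightarrow> real" where
  "lq_dual_norm q z = Sup {inner z x | x. lq_norm q x \<le> 1}"

definition mp_pinv :: "real^'m^'n \<Rightarrow> real^'n^'m" where
  "mp_pinv A = (THE B. A ** B ** A = A \<and> B ** A ** B = B \<and>
      transpose (A ** B) = A ** B \<and> transpose (B ** A) = B ** A)"

definition strictly_convex :: "('a::real_vector \<Rightarrow> real) \<Rightarrow> bool" where
  "strictly_convex f \<longleftrightarrow> (\<forall>x y t. x \<noteq> y \<and> 0 < t \<and> t < 1 \<longrightarrow>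
      f ((1 - t) *\<^sub>R x + t *\<^sub>R y) < (1 - t) * f x + t * f y)"

definition pen_obj ::
  "(real \<Rightarrow> real) \<Rightarrow> real^'p^'n \<Rightarrow> real^'n \<Rightarrow> ('k::finite \<Rightarrow> real^'p^'p)
     \<Rightarrow> ('k \<Rightarrow> real) \<Rightarrow> ('k \<Rightarrow> real) \<Rightarrow> real^'p \<Rightarrow> real" where
  "pen_obj g X Y M q lam b =
     g ((norm (Y - X *v b))\<^sup>2) + (\<Sum>j\<in>UNIV. lam j * lq_norm (q j) (M j *v b))"

definition loss_L ::
  "real^'p^'n \<Rightarrow> real^'p \<Rightarrow> ('k::finite \<Rightarrow> real^'p^'p) \<Rightarrow> ('k \<Rightarrow> real)
     \<Rightarrow> ('k \<Rightarrow> real) \<Rightarrow> real^'p \<Rightarrow> real" where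
  "loss_L X bstar M q a b =
     (1 / real CARD('n)) * (norm (X *v (bstar - b)))\<^sup>2
     + (1 / real CARD('n)) * (\<Sum>j\<in>UNIV. a j * lq_norm (q j) (M j *v b))"

end

theory Submission
  imports Defs
begin

text \<open>
  Since the link g is concave, g(|Y - X b|^2) lies below its tangent at the estimator, so the
  optimality of the estimator yields a basic inequality in which g enters only through the
  factor g'(|Y - X bhat|^2) that also scales every lambda_j. The noise term <eps, X(bhat - b)>
  is split along the identity I = sum_j P_j M_j^+ M_j into pairings of (X P_j M_j^+)^T eps with
  M_j(bhat - b), each bounded by Hoelder's inequality. With the prescribed tuning of lambda these
  terms are absorbed by the penalty, leaving a surplus 4 |(X P_j M_j^+)^T eps|_* |M_j b| per
  block, which is at most the stated maximum times a_j |M_j b|.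

  The inequality holds for each noise realisation satisfying the noise assumption; the
  hypotheses that only secure existence and uniqueness of the estimator (strict convexity,
  trivial joint kernel, projections P_j) and the probabilistic setting play no further role.
\<close>

lemma lq_norm_nonneg: "0 \<le> lq_norm q x"
  unfolding lq_norm_def by simp

lemma lq_norm_uminus: "lq_norm q (- x) = lq_norm q x"
  by (simp add: lq_norm_def)

lemma abs_component_le_lq_norm:
  assumes "q \<ge> 1"
  shows "\<bar>x $ i\<bar> \<le> lq_norm q x"
proof -
  have "\<bar>x $ i\<bar> powr q \<le> (\<Sum>i\<in>UNIV. \<bar>x $ i\<bar> powr q)"
    by (rule member_le_sum) auto
  then have "(\<bar>x $ i\<bar> powr q) powr (1 / q) \<le> (\<Sum>i\<in>UNIV. \<bar>x $ i\<bar> powr q) powr (1 / q)"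
    by (rule powr_mono2[rotated 2]) (use assms in auto)
  moreover have "(\<bar>x $ i\<bar> powr q) powr (1 / q) = \<bar>x $ i\<bar>"
    using assms by (simp add: powr_powr)
  ultimately show ?thesis
    by (simp add: lq_norm_def)
qed

lemma lq_norm_eq_0D:
  assumes "q \<ge> 1" and "lq_norm q x = 0"
  shows "x = 0"
  using abs_component_le_lq_norm[OF assms(1), of x] assms(2) by (simp add: vec_eq_iff)

lemma lq_norm_scaleR:
  assumes "q \<ge> 1"
  shows "lq_norm q (t *\<^sub>R x) = \<bar>t\<bar> * lq_norm q x"
proof -
  have "(\<Sum>i\<in>UNIV. \<bar>(t *\<^sub>R x) $ i\<bar> powr q) = \<bar>t\<bar> powr q * (\<Sum>i\<in>UNIV. \<bar>x $ i\<bar> powr q)"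
    by (simp add: abs_mult powr_mult sum_distrib_left)
  then have "lq_norm q (t *\<^sub>R x) = (\<bar>t\<bar> powr q) powr (1 / q) * lq_norm q x"
    by (simp add: lq_norm_def powr_mult)
  also have "(\<bar>t\<bar> powr q) powr (1 / q) = \<bar>t\<bar>"
    using assms by (simp add: powr_powr)
  finally show ?thesis .
qed

lemma bdd_above_lq_dual:
  assumes "q \<ge> 1"
  shows "bdd_above {inner z x | x. lq_norm q x \<le> 1}"
proof (rule bdd_aboveI)
  fix y assume "y \<in> {inner z x | x. lq_norm q x \<le> 1}"
  then obtain x where y: "y = inner z x" and x: "lq_norm q x \<le> 1" by auto
  have "y = (\<Sum>i\<in>UNIV. z $ i * x $ i)"
    by (simp add: y inner_vec_def)
  also have "\<dots> \<le> (\<Sum>i\<in>UNIV. \<bar>z $ i\<bar>)"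
  proof (rule sum_mono)
    fix i
    have "\<bar>x $ i\<bar> \<le> 1"
      using abs_component_le_lq_norm[OF assms, of x i] x by linarith
    then have "\<bar>z $ i * x $ i\<bar> \<le> \<bar>z $ i\<bar>"
      by (simp add: abs_mult mult_left_le)
    then show "z $ i * x $ i \<le> \<bar>z $ i\<bar>" by linarith
  qed
  finally show "y \<le> (\<Sum>i\<in>UNIV. \<bar>z $ i\<bar>)" .
qed

lemma inner_le_lq_dual_norm:
  assumes "q \<ge> 1"
  shows "inner z x \<le> lq_dual_norm q z * lq_norm q x"
proof (cases "lq_norm q x = 0")
  case True
  then show ?thesis using lq_norm_eq_0D[OF assms True] by simp
next
  case False
  define s where "s = lq_norm q x"
  have s: "s > 0" using False lq_norm_nonneg[of q x] by (simp add: s_def)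
  define x' where "x' = (1 / s) *\<^sub>R x"
  have "lq_norm q x' = 1"
    using s by (simp add: x'_def lq_norm_scaleR[OF assms] s_def)
  then have "inner z x' \<le> lq_dual_norm q z"
    unfolding lq_dual_norm_def by (intro cSup_upper bdd_above_lq_dual assms) auto
  then show ?thesis
    using s by (simp add: x'_def s_def field_simps)
qed

lemma mvt_closed_left:
  fixes g g' :: "real \<Rightarrow> real"
  assumes g_cont: "continuous_on {0..} g"
    and g_deriv: "\<And>x. x > 0 \<Longrightarrow> (g has_real_derivative g' x) (at x)"
    and "0 \<le> u" "u < v"
  obtains z where "u < z" "z < v" "g v - g u = (v - u) * g' z"
proof -
  have "continuous_on {u..v} g"
    by (rule continuous_on_subset[OF g_cont]) (use assms in auto)
  moreover have "g differentiable at x" if "u < x" for x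
    using g_deriv[of x] that \<open>0 \<le> u\<close> real_differentiable_def by fastforce
  ultimately obtain l z where z: "u < z" "z < v" and l: "(g has_real_derivative l) (at z)"
    and "g v - g u = (v - u) * l"
    using MVT[OF \<open>u < v\<close>] by blast
  moreover have "l = g' z"
    using DERIV_unique[OF l g_deriv] z \<open>0 \<le> u\<close> by linarith
  ultimately show ?thesis
    using that by blast
qed

lemma antimono_deriv_le_tangent:
  fixes g g' :: "real \<Rightarrow> real"
  assumes g_cont: "continuous_on {0..} g"
    and g_deriv: "\<And>x. x > 0 \<Longrightarrow> (g has_real_derivative g' x) (at x)"
    and g'_antimono: "\<And>x y. 0 < x \<Longrightarrow> x \<le> y \<Longrightarrow> g' y \<le> g' x"
    and "r > 0" and "x \<ge> 0"
  shows "g x \<le> g r + g' r * (x - r)"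
proof (cases x r rule: linorder_cases)
  case less
  then obtain z where "x < z" "z < r" "g r - g x = (r - x) * g' z"
    using mvt_closed_left[OF g_cont g_deriv \<open>x \<ge> 0\<close>] by blast
  moreover have "g' r \<le> g' z"
    using g'_antimono[of z r] \<open>x < z\<close> \<open>z < r\<close> \<open>x \<ge> 0\<close> by simp
  then have "(r - x) * g' r \<le> (r - x) * g' z"
    using less by (simp add: mult_left_mono)
  ultimately show ?thesis
    by (simp add: algebra_simps)
next
  case greater
  then obtain z where "r < z" "z < x" "g x - g r = (x - r) * g' z"
    using mvt_closed_left[OF g_cont g_deriv] \<open>r > 0\<close> by (metis less_imp_le)
  moreover have "g' z \<le> g' r"
    using g'_antimono[of r z] \<open>r < z\<close> \<open>r > 0\<close> by simp
  then have "(x - r) * g' z \<le> (x - r) * g' r"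
    using greater by (simp add: mult_left_mono)
  ultimately show ?thesis
    by (simp add: algebra_simps)
qed simp

lemma matrix_vector_mult_sum_left:
  fixes A :: "'k \<Rightarrow> real^'m^'n"
  shows "(\<Sum>j\<in>S. A j) *v v = (\<Sum>j\<in>S. A j *v v)"
  by (induct S rule: infinite_finite_induct) (simp_all add: matrix_vector_mult_add_rdistrib)

lemma inner_decompose_along_resolution:
  fixes X :: "real^'p^'n" and M N :: "'k::finite \<Rightarrow> real^'p^'p"
  assumes "(\<Sum>j\<in>UNIV. N j ** M j) = mat 1"
  shows "inner e (X *v v) = (\<Sum>j\<in>UNIV. inner (transpose (X ** N j) *v e) (M j *v v))"
proof -
  have "X *v v = X *v ((\<Sum>j\<in>UNIV. N j ** M j) *v v)"
    by (simp add: assms)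
  also have "\<dots> = (\<Sum>j\<in>UNIV. (X ** N j) *v (M j *v v))"
    by (simp add: matrix_vector_mult_sum_left linear_sum[OF matrix_vector_mul_linear[of X]]
        matrix_vector_mul_assoc matrix_mul_assoc)
  finally show ?thesis
    by (simp add: inner_sum_right dot_lmul_matrix)
qed

lemma inner_diff_le_lq_dual_norms:
  fixes X :: "real^'p^'n" and M N :: "'k::finite \<Rightarrow> real^'p^'p"
  assumes "(\<Sum>j\<in>UNIV. N j ** M j) = mat 1" and "\<And>j. q j \<ge> 1"
  shows "inner e (X *v (u - v)) \<le> (\<Sum>j\<in>UNIV. lq_dual_norm (q j) (transpose (X ** N j) *v e)
           * (lq_norm (q j) (M j *v u) + lq_norm (q j) (M j *v v)))"
  unfolding inner_decompose_along_resolution[where X = X, OF assms(1)]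
proof (rule sum_mono)
  fix j
  let ?z = "transpose (X ** N j) *v e"
  have "inner ?z (M j *v (u - v)) = inner ?z (M j *v u) + inner ?z (- (M j *v v))"
    by (simp add: matrix_vector_mult_diff_distrib inner_diff_right)
  also have "\<dots> \<le> lq_dual_norm (q j) ?z * lq_norm (q j) (M j *v u)
                + lq_dual_norm (q j) ?z * lq_norm (q j) (M j *v v)"
    using inner_le_lq_dual_norm[OF assms(2)[of j], of ?z "M j *v u"]
      inner_le_lq_dual_norm[OF assms(2)[of j], of ?z "- (M j *v v)"]
    by (simp add: lq_norm_uminus)
  finally show "inner ?z (M j *v (u - v)) \<le> lq_dual_norm (q j) ?z
           * (lq_norm (q j) (M j *v u) + lq_norm (q j) (M j *v v))"
    by (simp add: distrib_left)
qed

lemma pen_obj_basic_inequality: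
  fixes X :: "real^'p^'n" and M :: "'k::finite \<Rightarrow> real^'p^'p" and g g' :: "real \<Rightarrow> real"
  assumes g_cont: "continuous_on {0..} g"
    and g_deriv: "\<And>x. x > 0 \<Longrightarrow> (g has_real_derivative g' x) (at x)"
    and g'_pos: "\<And>x. x > 0 \<Longrightarrow> g' x > 0"
    and g'_antimono: "\<And>x y. 0 < x \<Longrightarrow> x \<le> y \<Longrightarrow> g' y \<le> g' x"
    and opt: "\<And>b. pen_obj g X (X *v bstar + e) M q lam bh \<le> pen_obj g X (X *v bstar + e) M q lam b"
    and res: "X *v bstar + e - X *v bh \<noteq> 0"
    and lam: "\<And>j. lam j = 2 * g' ((norm (X *v bstar + e - X *v bh))\<^sup>2) * w j"
  shows "(norm (X *v (bstar - bh)))\<^sup>2 + 2 * (\<Sum>j\<in>UNIV. w j * lq_norm (q j) (M j *v bh))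
     \<le> (norm (X *v (bstar - b)))\<^sup>2 + 2 * (\<Sum>j\<in>UNIV. w j * lq_norm (q j) (M j *v b))
        + 2 * inner e (X *v (bh - b))"
proof -
  define Y where "Y = X *v bstar + e"
  define rh where "rh = (norm (Y - X *v bh))\<^sup>2"
  define rb where "rb = (norm (Y - X *v b))\<^sup>2"
  define G where "G = g' rh"
  define pen where "pen \<beta> = (\<Sum>j\<in>UNIV. w j * lq_norm (q j) (M j *v \<beta>))" for \<beta>
  have "rh > 0"
    using res by (simp add: rh_def Y_def)
  then have "G > 0"
    using g'_pos by (simp add: G_def)
  have pen_obj_eq: "pen_obj g X Y M q lam \<beta> = g ((norm (Y - X *v \<beta>))\<^sup>2) + 2 * G * pen \<beta>" for \<beta>
    by (simp add: pen_obj_def pen_def lam G_def rh_def Y_def sum_distrib_left mult.assoc)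
  have "g rh + 2 * G * pen bh \<le> g rb + 2 * G * pen b"
    using opt[of b] by (simp add: pen_obj_eq[unfolded Y_def] rh_def rb_def Y_def)
  moreover have "g rb \<le> g rh + G * (rb - rh)"
    unfolding G_def
    by (rule antimono_deriv_le_tangent[OF g_cont g_deriv g'_antimono \<open>rh > 0\<close>]) (simp_all add: rb_def)
  ultimately have "G * (rh + 2 * pen bh) \<le> G * (rb + 2 * pen b)"
    by (simp add: algebra_simps)
  then have "rh + 2 * pen bh \<le> rb + 2 * pen b"
    using \<open>G > 0\<close> by simp
  moreover have "rh - rb = (norm (X *v (bstar - bh)))\<^sup>2 - (norm (X *v (bstar - b)))\<^sup>2
                           - 2 * inner e (X *v (bh - b))"
  proof -
    have "Y - X *v \<beta> = e + X *v (bstar - \<beta>)" for \<beta>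
      by (simp add: Y_def matrix_vector_mult_diff_distrib)
    moreover have "X *v (bh - b) = X *v (bstar - b) - X *v (bstar - bh)"
      by (simp add: matrix_vector_mult_diff_distrib)
    ultimately show ?thesis
      unfolding rh_def rb_def power2_norm_eq_inner
      by (simp add: inner_add_left inner_add_right inner_diff_right inner_commute algebra_simps)
  qed
  ultimately show ?thesis
    by (simp add: pen_def)
qed

lemma loss_L_oracle_bound:
  fixes X :: "real^'p^'n" and M :: "'k::finite \<Rightarrow> real^'p^'p"
  assumes basic: "(norm (X *v (bstar - bh)))\<^sup>2 + 2 * (\<Sum>j\<in>UNIV. c j * d j * lq_norm (q j) (M j *v bh))
     \<le> (norm (X *v (bstar - b)))\<^sup>2 + 2 * (\<Sum>j\<in>UNIV. c j * d j * lq_norm (q j) (M j *v b)) + 2 * t"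
    and noise: "t \<le> (\<Sum>j\<in>UNIV. d j * (lq_norm (q j) (M j *v bh) + lq_norm (q j) (M j *v b)))"
    and a: "\<And>j. a j = 2 * (c j - 1) * d j"
    and K: "\<And>j. 4 * d j \<le> K * a j" and "K \<ge> 0"
  shows "loss_L X bstar M q a bh \<le> (1 + K) * loss_L X bstar M q a b"
proof -
  define mh where "mh j = lq_norm (q j) (M j *v bh)" for j
  define m where "m j = lq_norm (q j) (M j *v b)" for j
  define A where "A = (norm (X *v (bstar - bh)))\<^sup>2"
  define B where "B = (norm (X *v (bstar - b)))\<^sup>2"
  \<comment> \<open>all terms in mh j cancel because a j = 2 (c j - 1) d j\<close>
  have block: "a j * mh j + 2 * (d j * (mh j + m j)) + 2 * (c j * d j * m j) - 2 * (c j * d j * mh j)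
                 \<le> (1 + K) * (a j * m j)" for j
  proof -
    have "a j * mh j + 2 * (d j * (mh j + m j)) + 2 * (c j * d j * m j) - 2 * (c j * d j * mh j)
            = a j * m j + 4 * d j * m j"
      by (simp add: a algebra_simps)
    also have "4 * d j * m j \<le> K * a j * m j"
      using K[of j] by (intro mult_right_mono) (simp_all add: m_def lq_norm_nonneg)
    finally show ?thesis
      by (simp add: algebra_simps)
  qed
  have "(\<Sum>j\<in>UNIV. a j * mh j) + 2 * (\<Sum>j\<in>UNIV. d j * (mh j + m j))
          + 2 * (\<Sum>j\<in>UNIV. c j * d j * m j) - 2 * (\<Sum>j\<in>UNIV. c j * d j * mh j)
        \<le> (\<Sum>j\<in>UNIV. (1 + K) * (a j * m j))"
    using sum_mono[OF block]
    by (simp only: sum.distrib sum_subtractf sum_distrib_left[symmetric])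
  then have "A + (\<Sum>j\<in>UNIV. a j * mh j) \<le> B + (\<Sum>j\<in>UNIV. (1 + K) * (a j * m j))"
    using basic noise unfolding A_def B_def mh_def m_def by linarith
  also have "\<dots> \<le> (1 + K) * (B + (\<Sum>j\<in>UNIV. a j * m j))"
    using \<open>K \<ge> 0\<close> by (simp add: B_def distrib_left distrib_right sum_distrib_left)
  finally have "(A + (\<Sum>j\<in>UNIV. a j * mh j)) / CARD('n)
                \<le> (1 + K) * ((B + (\<Sum>j\<in>UNIV. a j * m j)) / CARD('n))"
    by (simp add: divide_right_mono)
  moreover have "loss_L X bstar M q a \<beta> = ((norm (X *v (bstar - \<beta>)))\<^sup>2
                   + (\<Sum>j\<in>UNIV. a j * lq_norm (q j) (M j *v \<beta>))) / CARD('n)" for \<beta>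
    by (simp add: loss_L_def add_divide_distrib)
  ultimately show ?thesis
    by (simp add: A_def B_def mh_def m_def)
qed

lemma le_mult_INF:
  fixes f :: "'a \<Rightarrow> real"
  assumes "\<And>b. y \<le> C * f b" and "C > 0"
  shows "y \<le> C * (INF b. f b)"
proof -
  have "y / C \<le> (INF b. f b)"
    by (rule cINF_greatest) (use assms in \<open>auto simp: field_simps\<close>)
  then show ?thesis
    using assms(2) by (simp add: field_simps)
qed

lemma penalized_estimator_oracle_inequality:
  fixes X :: "real^'p^'n" and M P :: "'k::finite \<Rightarrow> real^'p^'p" and g g' :: "real \<Rightarrow> real"
  assumes g_cont: "continuous_on {0..} g"
    and g_deriv: "\<And>x. x > 0 \<Longrightarrow> (g has_real_derivative g' x) (at x)"
    and g'_pos: "\<And>x. x > 0 \<Longrightarrow> g' x > 0"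
    and g'_antimono: "\<And>x y. 0 < x \<Longrightarrow> x \<le> y \<Longrightarrow> g' y \<le> g' x"
    and q_ge: "\<And>j. q j \<ge> 1"
    and P_sum: "(\<Sum>j\<in>UNIV. P j ** mp_pinv (M j) ** M j) = mat 1"
    and c_gt: "\<And>j. c j > 1"
    and d: "\<And>j. d j = lq_dual_norm (q j) (transpose (X ** P j ** mp_pinv (M j)) *v e)"
    and d_pos: "\<And>j. d j > 0"
    and a: "\<And>j. a j = 2 * (c j - 1) * d j"
    and opt: "\<And>b. pen_obj g X (X *v bstar + e) M q lam bh \<le> pen_obj g X (X *v bstar + e) M q lam b"
    and res: "X *v bstar + e - X *v bh \<noteq> 0"
    and lam: "\<And>j. lam j / (2 * g' ((norm (X *v bstar + e - X *v bh))\<^sup>2)) = c j * d j"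
  shows "loss_L X bstar M q a bh \<le> (1 + Max (range (\<lambda>j. 4 * d j / a j))) * (INF b. loss_L X bstar M q a b)"
proof -
  define K where "K = Max (range (\<lambda>j. 4 * d j / a j))"
  have a_pos: "a j > 0" for j
    using c_gt[of j] d_pos[of j] by (simp add: a)
  have K_ge: "4 * d j / a j \<le> K" for j
    unfolding K_def by (rule Max_ge) auto
  have K: "4 * d j \<le> K * a j" for j
    using K_ge[of j] a_pos[of j] by (simp add: pos_divide_le_eq)
  have "0 < 4 * d j / a j" for j
    using d_pos[of j] a_pos[of j] by simp
  then have "K > 0"
    using K_ge less_le_trans by blast
  have "g' ((norm (X *v bstar + e - X *v bh))\<^sup>2) > 0"
    using g'_pos res by simp
  then have lam_eq: "lam j = 2 * g' ((norm (X *v bstar + e - X *v bh))\<^sup>2) * (c j * d j)" for j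
    using lam[of j] by (simp add: field_simps)
  have "loss_L X bstar M q a bh \<le> (1 + K) * loss_L X bstar M q a b" for b
  proof (rule loss_L_oracle_bound[OF _ _ a K])
    show "(norm (X *v (bstar - bh)))\<^sup>2 + 2 * (\<Sum>j\<in>UNIV. c j * d j * lq_norm (q j) (M j *v bh))
       \<le> (norm (X *v (bstar - b)))\<^sup>2 + 2 * (\<Sum>j\<in>UNIV. c j * d j * lq_norm (q j) (M j *v b))
          + 2 * inner e (X *v (bh - b))"
      by (rule pen_obj_basic_inequality[OF g_cont g_deriv g'_pos g'_antimono opt res lam_eq])
    show "inner e (X *v (bh - b)) \<le> (\<Sum>j\<in>UNIV. d j * (lq_norm (q j) (M j *v bh) + lq_norm (q j) (M j *v b)))"
      using inner_diff_le_lq_dual_norms[OF P_sum q_ge] by (simp add: d matrix_mul_assoc)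
  qed (use \<open>K > 0\<close> in simp)
  then show ?thesis
    unfolding K_def[symmetric] by (rule le_mult_INF) (use \<open>K > 0\<close> in simp)
qed

theorem mainTheorem8:
  fixes Pr :: "'w measure"
    and X :: "real^'p^'n" and bstar :: "real^'p"
    and eps :: "'w \<Rightarrow> real^'n"
    and g g' :: "real \<Rightarrow> real"
    and M P :: "'k::finite \<Rightarrow> real^'p^'p" and q :: "'k \<Rightarrow> real"
    and c :: "'k \<Rightarrow> real"
    and lam :: "'w \<Rightarrow> 'k \<Rightarrow> real" and bhat :: "'w \<Rightarrow> real^'p"
  assumes prob: "prob_space Pr"
    and eps_rv: "eps \<in> borel_measurable Pr"
    and g0: "g 0 = 0" and g_nonneg: "\<And>x. g x \<ge> 0"
    and g_cont: "continuous_on {0..} g"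
    and g_mono: "strict_mono_on {0..} g"
    and g_deriv: "\<And>x. x > 0 \<Longrightarrow> (g has_real_derivative g' x) (at x)"
    and g'_cont: "continuous_on {0<..} g'"
    and g'_pos: "\<And>x. x > 0 \<Longrightarrow> g' x > 0"
    and g'_antimono: "\<And>x y. 0 < x \<Longrightarrow> x \<le> y \<Longrightarrow> g' y \<le> g' x"
    and g_sconv: "strictly_convex (\<lambda>\<alpha>::real^'n. g ((norm \<alpha>)\<^sup>2))"
    and ker: "(\<Inter>j. {v. M j *v v = 0}) = {0}"
    and q_ge: "\<And>j. q j \<ge> 1"
    and P_proj: "\<And>j. P j ** P j = P j"
    and P_sum: "(\<Sum>j\<in>UNIV. P j ** mp_pinv (M j) ** M j) = mat 1"
    and noise: "AE \<omega> in Pr. X *v bstar + eps \<omega> \<noteq> 0 \<and>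
        (\<forall>j. lq_dual_norm (q j) (transpose (X ** P j ** mp_pinv (M j)) *v eps \<omega>) > 0)"
    and c_gt: "\<And>j. c j > 1"
  shows "AE \<omega> in Pr.
     (let Y = X *v bstar + eps \<omega>;
          d = (\<lambda>j. lq_dual_norm (q j) (transpose (X ** P j ** mp_pinv (M j)) *v eps \<omega>));
          a = (\<lambda>j. 2 * (c j - 1) * d j)
      in (\<forall>j. lam \<omega> j > 0)
         \<and> (\<forall>b. pen_obj g X Y M q (lam \<omega>) (bhat \<omega>) \<le> pen_obj g X Y M q (lam \<omega>) b)
         \<and> Y - X *v bhat \<omega> \<noteq> 0
         \<and> (\<forall>j. lam \<omega> j / (2 * g' ((norm (Y - X *v bhat \<omega>))\<^sup>2)) = c j * d j)
         \<longrightarrow> loss_L X bstar M q a (bhat \<omega>)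
             \<le> (1 + Max (range (\<lambda>j. 4 * d j / a j)))
                * (INF b. loss_L X bstar M q a b))"
proof (rule eventually_mono[OF noise], unfold Let_def, intro impI)
  fix \<omega>
  let ?Y = "X *v bstar + eps \<omega>"
  let ?d = "\<lambda>j. lq_dual_norm (q j) (transpose (X ** P j ** mp_pinv (M j)) *v eps \<omega>)"
  let ?a = "\<lambda>j. 2 * (c j - 1) * ?d j"
  assume "?Y \<noteq> 0 \<and> (\<forall>j. ?d j > 0)"
    and "(\<forall>j. lam \<omega> j > 0)
      \<and> (\<forall>b. pen_obj g X ?Y M q (lam \<omega>) (bhat \<omega>) \<le> pen_obj g X ?Y M q (lam \<omega>) b)
      \<and> ?Y - X *v bhat \<omega> \<noteq> 0
      \<and> (\<forall>j. lam \<omega> j / (2 * g' ((norm (?Y - X *v bhat \<omega>))\<^sup>2)) = c j * ?d j)"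
  then have d_pos: "\<And>j. ?d j > 0"
    and opt: "\<And>b. pen_obj g X ?Y M q (lam \<omega>) (bhat \<omega>) \<le> pen_obj g X ?Y M q (lam \<omega>) b"
    and res: "?Y - X *v bhat \<omega> \<noteq> 0"
    and lam_eq: "\<And>j. lam \<omega> j / (2 * g' ((norm (?Y - X *v bhat \<omega>))\<^sup>2)) = c j * ?d j"
    by blast+
  show "loss_L X bstar M q ?a (bhat \<omega>)
      \<le> (1 + Max (range (\<lambda>j. 4 * ?d j / ?a j))) * (INF b. loss_L X bstar M q ?a b)"
    using penalized_estimator_oracle_inequality[where q = q and c = c and d = ?d and a = ?a and e = "eps \<omega>",
        OF g_cont g_deriv g'_pos g'_antimono q_ge P_sum
        c_gt refl d_pos refl opt res lam_eq] .
qed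

end
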